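(* Let $k\ge 2$, let $H$ be a digraph (possibly with loops), and let $D$ be an $H$-colored local in-tournament. If every directed cycle in $D$ has $H$-length at most $k-2$, then $D$ has a $(k,H)$-kernel.
   Context: All digraphs are finite. A local in-tournament is a digraph $D$ such that for every vertex $x$, the subdigraph induced by the in-neighbourhood $N^-(x)$ is a tournament (every two distinct vertices joined by exactly one arc). $D$ has no loops and comes with a map $\rho: A(D)\to V(H)$. For a walk $W=(x_0,\ldots,x_n)$ in $D$, there is an obstruction on $x_i$ if $(\rho(x_{i-1},x_i),\rho(x_i,x_{i+1})) \notin A(H)$; for an open walk this is considered at internal vertices $x_i$, $1\le i\le n-1$, for a closed walk (such as a cycle) at all $i\in\{0,\ldots,n-1\}$ with indices modulo $n$. $O_H(W)$ is the set of indices with an obstruction; the $H$-length is $l_H(W)=|O_H(W)|+1$ for open $W$ and $|O_H(W)|$ for closed $W$. A $(k,H)$-kernel ($k\ge2$) is a set $S\subseteq V(D)$ such that for every two distinct $u,v\in S$ every directed $uv$-path in $D$ has $H$-length at least $k$, and for every $x\in V(D)\setminus S$ there is a directed path from $x$ to a vertex of $S$ of $H$-length at most $k-1$. *)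

theory Defs
  imports Main
begin

definition digraph :: "'a set \<Rightarrow> ('a \<times> 'a) set \<Rightarrow> bool" where
  "digraph V A \<longleftrightarrow> finite V \<and> A \<subseteq> V \<times> V"

definition loopless :: "('a \<times> 'a) set \<Rightarrow> bool" where
  "loopless A \<longleftrightarrow> (\<forall>x. (x, x) \<notin> A)"

definition in_nbrs :: "('a \<times> 'a) set \<Rightarrow> 'a \<Rightarrow> 'a set" where
  "in_nbrs A x = {y. (y, x) \<in> A}"

definition local_in_tournament :: "'a set \<Rightarrow> ('a \<times> 'a) set \<Rightarrow> bool" where
  "local_in_tournament V A \<longleftrightarrow>
     (\<forall>x\<in>V. \<forall>u\<in>in_nbrs A x. \<forall>v\<in>in_nbrs A x. u \<noteq> v \<longrightarrow>
        ((u, v) \<in> A \<longleftrightarrow> (v, u) \<notin> A))"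

definition H_colouring :: "('a \<times> 'a) set \<Rightarrow> 'b set \<Rightarrow> ('a \<times> 'a \<Rightarrow> 'b) \<Rightarrow> bool" where
  "H_colouring A VH rho \<longleftrightarrow> (\<forall>e\<in>A. rho e \<in> VH)"

definition dpath :: "('a \<times> 'a) set \<Rightarrow> 'a list \<Rightarrow> bool" where
  "dpath A xs \<longleftrightarrow> xs \<noteq> [] \<and> distinct xs \<and>
     (\<forall>i. Suc i < length xs \<longrightarrow> (xs ! i, xs ! Suc i) \<in> A)"

definition dcycle :: "('a \<times> 'a) set \<Rightarrow> 'a list \<Rightarrow> bool" where
  "dcycle A xs \<longleftrightarrow> xs \<noteq> [] \<and> distinct xs \<and>
     (\<forall>i < length xs. (xs ! i, xs ! ((i + 1) mod length xs)) \<in> A)"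

definition obs_open :: "('b \<times> 'b) set \<Rightarrow> ('a \<times> 'a \<Rightarrow> 'b) \<Rightarrow> 'a list \<Rightarrow> nat set" where
  "obs_open AH rho xs = {i. 1 \<le> i \<and> Suc i < length xs \<and>
      (rho (xs ! (i - 1), xs ! i), rho (xs ! i, xs ! Suc i)) \<notin> AH}"

definition H_length_open :: "('b \<times> 'b) set \<Rightarrow> ('a \<times> 'a \<Rightarrow> 'b) \<Rightarrow> 'a list \<Rightarrow> nat" where
  "H_length_open AH rho xs = card (obs_open AH rho xs) + 1"

definition obs_closed :: "('b \<times> 'b) set \<Rightarrow> ('a \<times> 'a \<Rightarrow> 'b) \<Rightarrow> 'a list \<Rightarrow> nat set" where
  "obs_closed AH rho xs = (let n = length xs in {i. i < n \<and>
      (rho (xs ! ((i + n - 1) mod n), xs ! i), rho (xs ! i, xs ! ((i + 1) mod n))) \<notin> AH})"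

definition H_length_closed :: "('b \<times> 'b) set \<Rightarrow> ('a \<times> 'a \<Rightarrow> 'b) \<Rightarrow> 'a list \<Rightarrow> nat" where
  "H_length_closed AH rho xs = card (obs_closed AH rho xs)"

definition kH_kernel :: "nat \<Rightarrow> 'a set \<Rightarrow> ('a \<times> 'a) set \<Rightarrow> ('b \<times> 'b) set \<Rightarrow>
    ('a \<times> 'a \<Rightarrow> 'b) \<Rightarrow> 'a set \<Rightarrow> bool" where
  "kH_kernel k V A AH rho S \<longleftrightarrow> S \<subseteq> V \<and>
     (\<forall>u\<in>S. \<forall>v\<in>S. u \<noteq> v \<longrightarrow>
        (\<forall>xs. dpath A xs \<and> hd xs = u \<and> last xs = v \<longrightarrow> H_length_open AH rho xs \<ge> k)) \<and>
     (\<forall>x\<in>V - S. \<exists>xs. dpath A xs \<and> hd xs = x \<and> last xs \<in> S \<and>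
        H_length_open AH rho xs \<le> k - 1)"

end

theory Submission
  imports Defs
begin

text \<open>Call a directed path short if its H-length is at most k - 1. A path running along a cycle
  has at most one obstruction more than the cycle, so by hypothesis any two distinct vertices on
  a common cycle are joined by short paths in both directions. In a local in-tournament any two
  mutually reachable vertices lie on a common cycle: a cycle through x that misses y is left and
  re-entered by an ear, and since two in-neighbours of a vertex are always adjacent, the ear can be
  absorbed into a longer cycle. Hence short paths join any two vertices of a strong component, and
  a (k,H)-kernel is obtained by repeatedly taking a vertex s of a terminal strong component and
  discarding s together with every vertex having a short path to s.\<close>

abbreviation walk :: "('a \<times> 'a) set \<Rightarrow> 'a list \<Rightarrow> bool" where
  "walk A \<equiv> successively (\<lambda>x y. (x, y) \<in> A)"

definition closed_path :: "('a \<times> 'a) set \<Rightarrow> 'a list \<Rightarrow> bool" where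
  "closed_path A xs \<longleftrightarrow> xs \<noteq> [] \<and> distinct xs \<and> walk A xs \<and> (last xs, hd xs) \<in> A"

lemma dpath_iff_walk: "dpath A xs \<longleftrightarrow> xs \<noteq> [] \<and> distinct xs \<and> walk A xs"
  unfolding dpath_def successively_conv_nth by blast

lemma dcycle_iff_closed_path: "dcycle A xs \<longleftrightarrow> closed_path A xs"
proof (cases "xs = []")
  case False
  then have last_hd:
      "(xs ! (length xs - 1), xs ! ((length xs - 1 + 1) mod length xs)) = (last xs, hd xs)"
    by (simp add: last_conv_nth hd_conv_nth)
  have "(\<forall>i < length xs. (xs ! i, xs ! ((i + 1) mod length xs)) \<in> A) \<longleftrightarrow>
        (\<forall>i. Suc i < length xs \<longrightarrow> (xs ! i, xs ! Suc i) \<in> A) \<and> (last xs, hd xs) \<in> A"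
    (is "?cyclic \<longleftrightarrow> ?linear \<and> ?closing")
  proof
    assume cyclic: ?cyclic
    have ?linear
    proof (intro allI impI)
      fix i assume "Suc i < length xs"
      then show "(xs ! i, xs ! Suc i) \<in> A" using cyclic[rule_format, of i] by simp
    qed
    moreover have ?closing using cyclic[rule_format, of "length xs - 1"] False last_hd by simp
    ultimately show "?linear \<and> ?closing" ..
  next
    assume linear: "?linear \<and> ?closing"
    show ?cyclic
    proof (intro allI impI)
      fix i assume i: "i < length xs"
      show "(xs ! i, xs ! ((i + 1) mod length xs)) \<in> A"
      proof (cases "Suc i < length xs")
        case True
        then show ?thesis using linear by simp
      next
        case False
        then have "i = length xs - 1" using i by simp
        then show ?thesis using linear last_hd by simp
      qed
    qed
  qed
  then show ?thesis
    unfolding dcycle_def closed_path_def successively_conv_nth by blast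
qed (simp add: dcycle_def closed_path_def)

lemma closed_path_rotate1: "closed_path A xs \<Longrightarrow> closed_path A (rotate1 xs)"
  by (cases xs)
    (auto simp: closed_path_def successively_append_iff successively_Cons hd_append split: if_splits)

lemma closed_path_rotate: "closed_path A xs \<Longrightarrow> closed_path A (rotate n xs)"
  by (induction n) (simp_all add: closed_path_rotate1)

lemma closed_path_rotate_hd:
  assumes "closed_path A xs" "c \<in> set xs"
  obtains ys where "closed_path A ys" "set ys = set xs" "hd ys = c"
proof -
  obtain us vs where "xs = us @ c # vs" using assms(2) by (metis split_list)
  then have "rotate (length us) xs = c # vs @ us" by (simp add: rotate_append)
  then show ?thesis
    using that closed_path_rotate[OF assms(1), of "length us"] by (metis list.sel(1) set_rotate)
qed

lemma closed_path_rotate_last: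
  assumes "closed_path A xs" "c \<in> set xs"
  obtains ys where "closed_path A ys" "set ys = set xs" "last ys = c"
proof -
  obtain ys where ys: "closed_path A ys" "set ys = set xs" "hd ys = c"
    using closed_path_rotate_hd[OF assms] .
  then have "last (rotate1 ys) = c" by (cases ys) (auto simp: closed_path_def)
  then show ?thesis using that ys closed_path_rotate1 by (metis set_rotate1)
qed

lemma closed_path_subset_Domain: "closed_path A xs \<Longrightarrow> set xs \<subseteq> Domain A"
  unfolding dcycle_iff_closed_path[symmetric] dcycle_def by (metis DomainI in_set_conv_nth subsetI)

lemma closed_path_insert:
  assumes "closed_path A (xs @ ys)" "xs \<noteq> []" "ys \<noteq> []" "u \<notin> set (xs @ ys)"
    and "(last xs, u) \<in> A" "(u, hd ys) \<in> A"
  shows "closed_path A (xs @ u # ys)"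
  using assms by (auto simp: closed_path_def successively_append_iff successively_Cons)

definition in_semicomplete :: "('a \<times> 'a) set \<Rightarrow> bool" where
  "in_semicomplete A \<longleftrightarrow>
     (\<forall>x u v. (u, x) \<in> A \<longrightarrow> (v, x) \<in> A \<longrightarrow> u \<noteq> v \<longrightarrow> (u, v) \<in> A \<or> (v, u) \<in> A)"

lemma local_in_tournament_imp_in_semicomplete:
  assumes "A \<subseteq> V \<times> V" "local_in_tournament V A"
  shows "in_semicomplete A"
  using assms unfolding in_semicomplete_def local_in_tournament_def in_nbrs_def by blast

text \<open>The last vertex u of the walk and the predecessor p of its landing point on the cycle are
  both in-neighbours of that point, hence adjacent. If u \<rightarrow> p, the walk may land one step
  earlier; if p \<rightarrow> u, then u is inserted into the cycle between p and its successor and the walk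
  is shortened by one vertex.\<close>
lemma closed_path_absorb_walk:
  assumes "in_semicomplete A"
    and "closed_path A zs" "j < length zs" "distinct us" "set us \<inter> set zs = {}"
    and "walk A (last zs # us @ [zs ! j])"
  shows "\<exists>cs. closed_path A cs \<and> set zs \<union> set us \<subseteq> set cs"
  using assms(2-)
proof (induction "length us + j" arbitrary: us j zs rule: less_induct)
  case less
  note cyc = less.prems(1) and j = less.prems(2) and dist = less.prems(3)
    and disj = less.prems(4) and ear = less.prems(5)
  show ?case
  proof (cases "us = []")
    case True
    then show ?thesis using cyc by auto
  next
    case us_ne: False
    let ?u = "last us"
    have u_enters: "(?u, zs ! j) \<in> A" and walk_to_u: "walk A (last zs # us)"
      using ear us_ne successively_append_iff[of _ "last zs # us" "[zs ! j]"] by auto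
    show ?thesis
    proof (cases j)
      case 0
      then have "closed_path A (us @ zs)"
        using cyc dist disj ear u_enters us_ne
        by (auto simp: closed_path_def successively_append_iff successively_Cons hd_conv_nth nth_append)
      then show ?thesis by auto
    next
      case (Suc i)
      let ?p = "zs ! i"
      have "(?p, zs ! j) \<in> A"
        using cyc j Suc successively_nth[of "\<lambda>x y. (x, y) \<in> A" zs i] by (simp add: closed_path_def)
      moreover have "?p \<noteq> ?u"
        using disj j Suc us_ne by (metis Suc_lessD disjoint_iff last_in_set nth_mem)
      ultimately consider "(?u, ?p) \<in> A" | "(?p, ?u) \<in> A"
        using assms(1) u_enters unfolding in_semicomplete_def by blast
      then show ?thesis
      proof cases
        case 1
        then have "walk A (last zs # us @ [zs ! i])"
          using walk_to_u us_ne successively_append_iff[of _ "last zs # us" "[zs ! i]"] by auto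
        then show ?thesis
          using less.hyps[of us i zs] cyc j dist disj Suc by simp
      next
        case 2
        define zs' where "zs' = take j zs @ ?u # drop j zs"
        have u_new: "?u \<notin> set zs" using disj us_ne by (metis disjoint_iff last_in_set)
        have "last (take j zs) = ?p" "hd (drop j zs) = zs ! j"
          using j Suc by (simp_all add: take_Suc_conv_app_nth hd_drop_conv_nth)
        then have zs'_cyc: "closed_path A zs'"
          unfolding zs'_def using cyc j Suc u_new 2 u_enters
          by (intro closed_path_insert) auto
        have zs'_props: "last zs' = last zs" "zs' ! j = ?u" "j < length zs'"
          using j by (auto simp: zs'_def nth_append)
        have zs'_set: "set zs' = insert ?u (set zs)"
          unfolding zs'_def by (metis Un_insert_right append_take_drop_id list.set(2) set_append)
        have us_split: "us = butlast us @ [?u]" using us_ne by simp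
        have "distinct (butlast us @ [?u])" using dist us_ne by simp
        then have us'_dist: "distinct (butlast us)" "?u \<notin> set (butlast us)" by simp_all
        then have us'_disj: "set (butlast us) \<inter> set zs' = {}"
          using disj zs'_set by (auto dest: in_set_butlastD)
        have "length (butlast us) + j < length us + j" using us_ne by simp
        moreover have "walk A (last zs' # butlast us @ [zs' ! j])"
          using walk_to_u us_ne by (simp add: zs'_props)
        ultimately have "\<exists>cs. closed_path A cs \<and> set zs' \<union> set (butlast us) \<subseteq> set cs"
          by (rule less.hyps[OF _ zs'_cyc zs'_props(3) us'_dist(1) us'_disj])
        then obtain cs where "closed_path A cs" "set zs' \<union> set (butlast us) \<subseteq> set cs"
          by blast
        moreover have "set us = insert ?u (set (butlast us))"
          using arg_cong[OF us_split, of set] by simp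
        ultimately show ?thesis using zs'_set by auto
      qed
    qed
  qed
qed

lemma rtrancl_imp_distinct_walk:
  assumes "(a, b) \<in> R\<^sup>*"
  shows "\<exists>ps. ps \<noteq> [] \<and> hd ps = a \<and> last ps = b \<and> distinct ps \<and> walk R ps"
  using assms
proof (induction rule: converse_rtrancl_induct)
  case base
  show ?case by (intro exI[of _ "[b]"]) simp
next
  case (step a a')
  then obtain ps where ps: "ps \<noteq> []" "hd ps = a'" "last ps = b" "distinct ps" "walk R ps"
    by blast
  show ?case
  proof (cases "a \<in> set ps")
    case True
    then obtain xs ys where "ps = xs @ a # ys" by (metis split_list)
    then show ?thesis
      using ps by (intro exI[of _ "a # ys"]) (auto simp: successively_append_iff)
  next
    case False
    then show ?thesis
      using ps step.hyps(1) by (intro exI[of _ "a # ps"]) (auto simp: successively_Cons)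
  qed
qed

lemma walk_imp_rtrancl: "walk R ps \<Longrightarrow> ps \<noteq> [] \<Longrightarrow> (hd ps, last ps) \<in> R\<^sup>*"
  by (induction ps) (auto simp: successively_Cons intro: converse_rtrancl_into_rtrancl)

lemma walk_take: "walk A xs \<Longrightarrow> walk A (take m xs)"
  by (metis append_take_drop_id successively_append_iff)

lemma walk_Restr_subset: "walk (Restr R B) ps \<Longrightarrow> hd ps \<in> B \<Longrightarrow> set ps \<subseteq> B"
  by (induction ps) (auto simp: successively_Cons)

lemma rtrancl_leave:
  assumes "(a, b) \<in> A\<^sup>*" "a \<in> C" "b \<notin> C"
  shows "\<exists>c u. c \<in> C \<and> u \<notin> C \<and> (c, u) \<in> A \<and> (u, b) \<in> A\<^sup>*"
  using assms
proof (induction rule: rtrancl_induct)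
  case (step y z)
  show ?case
  proof (cases "y \<in> C")
    case False
    then show ?thesis using step by (meson rtrancl.rtrancl_into_rtrancl)
  qed (use step in blast)
qed simp

lemma rtrancl_enter:
  assumes "(a, b) \<in> A\<^sup>*" "a \<notin> C" "b \<in> C"
  shows "\<exists>u c. (a, u) \<in> (Restr A (- C))\<^sup>* \<and> u \<notin> C \<and> c \<in> C \<and> (u, c) \<in> A"
  using assms
proof (induction rule: converse_rtrancl_induct)
  case (step y z)
  show ?case
  proof (cases "z \<in> C")
    case False
    then have "(y, z) \<in> Restr A (- C)" using step by auto
    then show ?thesis using step False by (meson converse_rtrancl_into_rtrancl)
  qed (use step in blast)
qed simp

lemma closed_path_extend:
  assumes "in_semicomplete A" "closed_path A zs" "x \<in> set zs" "y \<notin> set zs"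
    and "(x, y) \<in> A\<^sup>*" "(y, x) \<in> A\<^sup>*"
  shows "\<exists>zs'. closed_path A zs' \<and> set zs \<subset> set zs'"
proof -
  let ?C = "set zs"
  obtain c u where c: "c \<in> ?C" and u: "u \<notin> ?C" "(c, u) \<in> A" "(u, y) \<in> A\<^sup>*"
    using rtrancl_leave[OF assms(5,3,4)] by blast
  have "(u, x) \<in> A\<^sup>*" using u(3) assms(6) by (rule rtrancl_trans)
  then obtain u' c' where u': "(u, u') \<in> (Restr A (- ?C))\<^sup>*" "(u', c') \<in> A" and c': "c' \<in> ?C"
    using rtrancl_enter[of u x A ?C] u(1) assms(3) by blast
  obtain us where us: "us \<noteq> []" "hd us = u" "last us = u'" "distinct us" "walk (Restr A (- ?C)) us"
    using rtrancl_imp_distinct_walk[OF u'(1)] by blast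
  have us_outside: "set us \<inter> ?C = {}" using walk_Restr_subset[OF us(5)] us(2) u(1) by auto
  have "walk A us" using us(5) by (rule successively_mono) auto
  obtain zs0 where zs0: "closed_path A zs0" "set zs0 = ?C" "last zs0 = c"
    using closed_path_rotate_last[OF assms(2) c] .
  obtain j where j: "j < length zs0" "zs0 ! j = c'" using c' zs0(2) by (metis in_set_conv_nth)
  have "walk A (last zs0 # us @ [zs0 ! j])"
    using \<open>walk A us\<close> us u(2) u'(2) zs0(3) j(2)
    by (auto simp: successively_Cons successively_append_iff hd_append)
  then obtain cs where "closed_path A cs" "?C \<union> set us \<subseteq> set cs"
    using closed_path_absorb_walk[OF assms(1) zs0(1) j(1) us(4)] us_outside zs0(2) by auto
  moreover have "u \<in> set us" using us(1,2) by auto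
  ultimately show ?thesis using u(1) by blast
qed

lemma closed_path_through:
  assumes "(x, y) \<in> A\<^sup>*" "(y, x) \<in> A\<^sup>*" "x \<noteq> y"
  shows "\<exists>zs. closed_path A zs \<and> x \<in> set zs"
proof -
  obtain w where w: "(x, w) \<in> A" "(w, y) \<in> A\<^sup>*"
    using assms(1,3) by (metis converse_rtranclE)
  have wx: "(w, x) \<in> A\<^sup>*" using w(2) assms(2) by (rule rtrancl_trans)
  obtain ps where ps: "ps \<noteq> []" "hd ps = w" "last ps = x" "distinct ps" "walk A ps"
    using rtrancl_imp_distinct_walk[OF wx] by blast
  then have "closed_path A ps" using w(1) unfolding closed_path_def by simp
  moreover have "x \<in> set ps" using ps(1,3) last_in_set by blast
  ultimately show ?thesis by blast
qed

lemma common_closed_path: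
  assumes "in_semicomplete A" "finite A"
    and "(x, y) \<in> A\<^sup>*" "(y, x) \<in> A\<^sup>*" "x \<noteq> y"
  shows "\<exists>zs. closed_path A zs \<and> x \<in> set zs \<and> y \<in> set zs"
proof -
  let ?P = "\<lambda>zs. closed_path A zs \<and> x \<in> set zs"
  obtain zs0 where "?P zs0" using closed_path_through[OF assms(3-5)] by blast
  moreover have "card (set zs) < Suc (card (Domain A))" if "?P zs" for zs
    using that card_mono[OF finite_Domain[OF assms(2)] closed_path_subset_Domain] by (simp add: less_Suc_eq_le)
  ultimately obtain zs where zs: "?P zs" and maximal: "\<And>zs'. ?P zs' \<Longrightarrow> card (set zs') \<le> card (set zs)"
    using ex_has_greatest_nat[of ?P zs0 "\<lambda>zs. card (set zs)"] by blast
  have "y \<in> set zs"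
  proof (rule ccontr)
    assume "y \<notin> set zs"
    then obtain zs' where "closed_path A zs'" "set zs \<subset> set zs'"
      using closed_path_extend[OF assms(1)] zs assms(3,4) by blast
    moreover have "x \<in> set zs'" using zs \<open>set zs \<subset> set zs'\<close> by blast
    ultimately show False
      using maximal[of zs'] psubset_card_mono[of "set zs'" "set zs"] by auto
  qed
  then show ?thesis using zs by blast
qed

lemma obs_open_take_subset: "obs_open AH rho (take m zs) \<subseteq> obs_closed AH rho zs"
proof
  fix i assume "i \<in> obs_open AH rho (take m zs)"
  then have i: "1 \<le> i" "Suc i < m" "Suc i < length zs"
    and obstructed: "(rho (zs ! (i - 1), zs ! i), rho (zs ! i, zs ! Suc i)) \<notin> AH"
      unfolding obs_open_def by auto
  let ?n = "length zs"
  have "(i + ?n - 1) mod ?n = ((i - 1) + ?n) mod ?n"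
    using i(1) by (intro arg_cong[where f = "\<lambda>t. t mod ?n"]) linarith
  also have "\<dots> = i - 1" using i(3) by simp
  finally have "(i + ?n - 1) mod ?n = i - 1" .
  moreover have "(i + 1) mod ?n = Suc i" using i by simp
  ultimately show "i \<in> obs_closed AH rho zs"
    using i obstructed unfolding obs_closed_def Let_def by auto
qed

definition H_reaches :: "nat \<Rightarrow> ('a \<times> 'a) set \<Rightarrow> ('b \<times> 'b) set \<Rightarrow> ('a \<times> 'a \<Rightarrow> 'b) \<Rightarrow>
    'a \<Rightarrow> 'a \<Rightarrow> bool" where
  "H_reaches k A AH rho x y \<longleftrightarrow>
     (\<exists>ps. dpath A ps \<and> hd ps = x \<and> last ps = y \<and> H_length_open AH rho ps \<le> k - 1)"

lemma kH_kernel_iff_H_reaches: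
  "kH_kernel k V A AH rho S \<longleftrightarrow> S \<subseteq> V \<and>
     (\<forall>u\<in>S. \<forall>v\<in>S. u \<noteq> v \<longrightarrow> \<not> H_reaches k A AH rho u v) \<and>
     (\<forall>x\<in>V - S. \<exists>s\<in>S. H_reaches k A AH rho x s)"
proof -
  have "k \<le> H_length_open AH rho xs \<longleftrightarrow> \<not> H_length_open AH rho xs \<le> k - 1" for xs
    unfolding H_length_open_def by arith
  then show ?thesis unfolding kH_kernel_def H_reaches_def by blast
qed

lemma H_reaches_imp_rtrancl: "H_reaches k A AH rho x y \<Longrightarrow> (x, y) \<in> A\<^sup>*"
  unfolding H_reaches_def dpath_iff_walk by (metis walk_imp_rtrancl)

lemma mutually_reachable_imp_H_reaches:
  assumes "in_semicomplete A" "finite A" "k \<ge> 2"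
    and "\<forall>xs. dcycle A xs \<longrightarrow> H_length_closed AH rho xs \<le> k - 2"
    and "(x, y) \<in> A\<^sup>*" "(y, x) \<in> A\<^sup>*" "x \<noteq> y"
  shows "H_reaches k A AH rho x y"
proof -
  obtain zs0 where zs0: "closed_path A zs0" "x \<in> set zs0" "y \<in> set zs0"
    using common_closed_path[OF assms(1,2,5-7)] by blast
  obtain zs where zs: "closed_path A zs" "set zs = set zs0" "hd zs = x"
    using closed_path_rotate_hd[OF zs0(1,2)] .
  obtain j where j: "j < length zs" "zs ! j = y" using zs(2) zs0(3) by (metis in_set_conv_nth)
  let ?ps = "take (Suc j) zs"
  have "dpath A ?ps"
    using zs(1) walk_take unfolding dpath_iff_walk closed_path_def by auto
  moreover have "hd ?ps = x" using zs(1,3) by (simp add: closed_path_def hd_take)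
  moreover have "last ?ps = y" using j by (simp add: take_Suc_conv_app_nth)
  moreover have "card (obs_open AH rho ?ps) \<le> card (obs_closed AH rho zs)"
    by (rule card_mono[OF _ obs_open_take_subset]) (simp add: obs_closed_def Let_def)
  moreover have "card (obs_closed AH rho zs) \<le> k - 2"
    using assms(4) zs(1) unfolding dcycle_iff_closed_path H_length_closed_def by blast
  ultimately show ?thesis
    unfolding H_reaches_def H_length_open_def using assms(3) by (intro exI[of _ ?ps]) auto
qed

lemma finite_preorder_has_terminal:
  assumes "finite W" "W \<noteq> {}" "trans Q" "refl Q"
  obtains s where "s \<in> W" "\<And>w. w \<in> W \<Longrightarrow> (s, w) \<in> Q \<Longrightarrow> (w, s) \<in> Q"
proof -
  define succs where "succs s = {w \<in> W. (s, w) \<in> Q}" for s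
  obtain s where s: "s \<in> W" and least: "\<And>w. w \<in> W \<Longrightarrow> card (succs s) \<le> card (succs w)"
    using assms(2) ex_has_least_nat[of "\<lambda>s. s \<in> W" _ "\<lambda>s. card (succs s)"] by blast
  have "(w, s) \<in> Q" if w: "w \<in> W" "(s, w) \<in> Q" for w
  proof (rule ccontr)
    assume "(w, s) \<notin> Q"
    then have "succs w \<subset> succs s"
      using w s assms(3) reflD[OF assms(4), of s] unfolding succs_def trans_def by blast
    then have "card (succs w) < card (succs s)"
      using assms(1) by (intro psubset_card_mono) (auto simp: succs_def)
    then show False using least[OF w(1)] by simp
  qed
  then show thesis using that s by blast
qed

text \<open>Put a Q-terminal element s into the set, delete s and its R-predecessors, and recurse.\<close>
lemma exists_independent_absorbing_set:
  assumes "finite W" "trans Q" "refl Q"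
    and R_Q: "\<And>x y. R x y \<Longrightarrow> (x, y) \<in> Q"
    and Q_R: "\<And>x y. x \<in> W \<Longrightarrow> y \<in> W \<Longrightarrow> x \<noteq> y \<Longrightarrow> (x, y) \<in> Q \<Longrightarrow> (y, x) \<in> Q \<Longrightarrow> R x y"
  shows "\<exists>S \<subseteq> W. (\<forall>u\<in>S. \<forall>v\<in>S. u \<noteq> v \<longrightarrow> \<not> R u v) \<and> (\<forall>x\<in>W - S. \<exists>s\<in>S. R x s)"
  using assms(1) Q_R
proof (induction W rule: finite_psubset_induct)
  case (psubset W)
  show ?case
  proof (cases "W = {}")
    case False
    obtain s where s: "s \<in> W" and terminal: "\<And>w. w \<in> W \<Longrightarrow> (s, w) \<in> Q \<Longrightarrow> (w, s) \<in> Q"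
      using finite_preorder_has_terminal[OF psubset.hyps(1) False assms(2,3)] by blast
    define W' where "W' = W - {s} - {x \<in> W. R x s}"
    have "W' \<subset> W" using s by (auto simp: W'_def)
    moreover have "R x y" if "x \<in> W'" "y \<in> W'" "x \<noteq> y" "(x, y) \<in> Q" "(y, x) \<in> Q" for x y
      using that by (intro psubset.prems) (auto simp: W'_def)
    ultimately have "\<exists>S' \<subseteq> W'. (\<forall>u\<in>S'. \<forall>v\<in>S'. u \<noteq> v \<longrightarrow> \<not> R u v) \<and>
        (\<forall>x\<in>W' - S'. \<exists>t\<in>S'. R x t)"
      by (rule psubset.IH)
    then obtain S' where S': "S' \<subseteq> W'" "\<forall>u\<in>S'. \<forall>v\<in>S'. u \<noteq> v \<longrightarrow> \<not> R u v"
      "\<forall>x\<in>W' - S'. \<exists>t\<in>S'. R x t"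
      by blast
    have "\<not> R s v \<and> \<not> R v s" if "v \<in> S'" for v
      using that S'(1) s terminal R_Q psubset.prems[of v s] by (auto simp: W'_def)
    then have "insert s S' \<subseteq> W \<and> (\<forall>u\<in>insert s S'. \<forall>v\<in>insert s S'. u \<noteq> v \<longrightarrow> \<not> R u v) \<and>
        (\<forall>x\<in>W - insert s S'. \<exists>t\<in>insert s S'. R x t)"
      using s S' by (auto simp: W'_def)
    then show ?thesis by blast
  qed simp
qed

theorem theorem27:
  fixes k :: nat and V :: "'a set" and A :: "('a \<times> 'a) set"
    and VH :: "'b set" and AH :: "('b \<times> 'b) set" and rho :: "'a \<times> 'a \<Rightarrow> 'b"
  assumes "k \<ge> 2"
    and "digraph V A" and "loopless A"
    and "digraph VH AH"
    and "H_colouring A VH rho"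
    and "local_in_tournament V A"
    and "\<forall>xs. dcycle A xs \<longrightarrow> H_length_closed AH rho xs \<le> k - 2"
  shows "\<exists>S. kH_kernel k V A AH rho S"
proof -
  have V: "finite V" "A \<subseteq> V \<times> V" using assms(2) unfolding digraph_def by auto
  then have finite_A: "finite A" by (metis finite_SigmaI finite_subset)
  have semicomplete: "in_semicomplete A"
    using local_in_tournament_imp_in_semicomplete[OF V(2) assms(6)] .
  have mutual: "H_reaches k A AH rho x y"
    if "x \<in> V" "y \<in> V" "x \<noteq> y" "(x, y) \<in> A\<^sup>*" "(y, x) \<in> A\<^sup>*" for x y
    using mutually_reachable_imp_H_reaches[OF semicomplete finite_A assms(1,7) that(4,5,3)] .
  have "\<exists>S \<subseteq> V. (\<forall>u\<in>S. \<forall>v\<in>S. u \<noteq> v \<longrightarrow> \<not> H_reaches k A AH rho u v) \<and>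
      (\<forall>x\<in>V - S. \<exists>s\<in>S. H_reaches k A AH rho x s)"
    by (rule exists_independent_absorbing_set[OF V(1) trans_rtrancl refl_rtrancl
          H_reaches_imp_rtrancl mutual])
  then show ?thesis unfolding kH_kernel_iff_H_reaches by blast
qed

end
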